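(* For every integer $p\geq 2$ and $d\geq 3$ there exists a finite group $\Gamma$ and a subset $D=\{\gamma_1,\ldots,\gamma_d\}\subseteq\Gamma$ with $|D|=d$ such that $(\Gamma,D)$ satisfies condition $\mathcal{G}(p)$.
   Context: For $p\geq 1$, the pair $(\Gamma,D)$ (with $\Gamma$ having identity $e$) satisfies condition $\mathcal{R}(p)$ if for every sequence of indices $i_0,\ldots,i_{2p-1}\in\{1,\ldots,d\}$ the equality $\gamma_{i_0}\gamma_{i_1}^{-1}\gamma_{i_2}\gamma_{i_3}^{-1}\cdots\gamma_{i_{2p-2}}\gamma_{i_{2p-1}}^{-1}=e$ implies $i_l=i_{l+1}$ for some $l\in\{0,\ldots,2p-1\}$ (indices modulo $2p$). It satisfies $\mathcal{G}(p)$ if it satisfies $\mathcal{R}(1),\ldots,\mathcal{R}(p)$. *)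

theory Defs
  imports "HOL-Algebra.Group"
begin

fun alt_word :: "('a, 'b) monoid_scheme \<Rightarrow> (nat \<Rightarrow> 'a) \<Rightarrow> (nat \<Rightarrow> nat) \<Rightarrow> nat \<Rightarrow> 'a" where
  "alt_word G g i 0 = \<one>\<^bsub>G\<^esub>"
| "alt_word G g i (Suc k) =
     alt_word G g i k \<otimes>\<^bsub>G\<^esub> (g (i (2*k)) \<otimes>\<^bsub>G\<^esub> inv\<^bsub>G\<^esub> (g (i (2*k+1))))"

definition cond_R :: "('a, 'b) monoid_scheme \<Rightarrow> (nat \<Rightarrow> 'a) \<Rightarrow> nat \<Rightarrow> nat \<Rightarrow> bool" where
  "cond_R G g d p \<longleftrightarrow>
     (\<forall>i :: nat \<Rightarrow> nat. (\<forall>l < 2*p. i l \<in> {1..d}) \<longrightarrow> alt_word G g i p = \<one>\<^bsub>G\<^esub> \<longrightarrow>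
        (\<exists>l < 2*p. i l = i ((l+1) mod (2*p))))"

definition cond_G :: "('a, 'b) monoid_scheme \<Rightarrow> (nat \<Rightarrow> 'a) \<Rightarrow> nat \<Rightarrow> nat \<Rightarrow> bool" where
  "cond_G G g d p \<longleftrightarrow> (\<forall>q\<in>{1..p}. cond_R G g d q)"

end

theory Submission
  imports Defs "HOL-Algebra.Bij" "HOL-Library.Countable_Set"
begin

text \<open>Let the generator \<open>a \<in> {1..d}\<close> act on the reduced words of length at most \<open>N\<close> in the
  free product of \<open>d\<close> copies of \<open>\<int>/2\<close> by left multiplication, fixing the words of length \<open>N\<close>
  that it would lengthen. These actions are involutions, so they generate a finite permutation
  group. If an alternating word of length \<open>2q \<le> N\<close> has no two equal neighbours, then applying
  it to the empty word spells out its own (reduced) sequence of letters; hence it is not the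
  identity. The hypotheses \<open>p \<ge> 2\<close> and \<open>d \<ge> 3\<close> are stronger than needed: \<open>p \<ge> 1\<close> suffices.\<close>

lemma alt_word_closed:
  assumes "group G" and "\<forall>l < 2*k. g (i l) \<in> carrier G"
  shows "alt_word G g i k \<in> carrier G"
  using assms(2)
proof (induction k)
  case 0
  show ?case using assms(1) by (simp add: group.is_monoid monoid.one_closed)
next
  case (Suc k)
  then show ?case
    using assms(1) by (simp add: group.inv_closed group.is_monoid monoid.m_closed)
qed

lemma (in group_hom) alt_word_hom:
  assumes "\<forall>l < 2*k. g (i l) \<in> carrier G"
  shows "alt_word H (\<lambda>a. h (g a)) i k = h (alt_word G g i k)"
  using assms
proof (induction k)
  case (Suc k)
  then have "alt_word G g i k \<in> carrier G"
    using alt_word_closed[OF G.group_axioms] by simp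
  with Suc show ?case by simp
qed simp

lemma (in group_hom) cond_R_inj_hom:
  assumes "inj_on h (carrier G)" and "g ` {1..d} \<subseteq> carrier G" and "cond_R G g d p"
  shows "cond_R H (\<lambda>a. h (g a)) d p"
  unfolding cond_R_def
proof (intro allI impI)
  fix i assume dom: "\<forall>l < 2*p. i l \<in> {1..d}"
    and one: "alt_word H (\<lambda>a. h (g a)) i p = \<one>\<^bsub>H\<^esub>"
  have gen: "\<forall>l < 2*p. g (i l) \<in> carrier G" using dom assms(2) by auto
  then have "h (alt_word G g i p) = h \<one>" using one alt_word_hom by simp
  then have "alt_word G g i p = \<one>"
    using inj_onD[OF assms(1)] alt_word_closed[of G p g i, OF G.group_axioms gen] by blast
  then show "\<exists>l < 2*p. i l = i ((l + 1) mod (2*p))"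
    using assms(3) dom unfolding cond_R_def by blast
qed

lemma (in group_hom) cond_G_inj_hom:
  assumes "inj_on h (carrier G)" and "g ` {1..d} \<subseteq> carrier G" and "cond_G G g d p"
  shows "cond_G H (\<lambda>a. h (g a)) d p"
  using assms cond_R_inj_hom unfolding cond_G_def by blast

lemma countable_group_iso_nat_monoid:
  assumes "group G" and "countable (carrier G)"
  obtains H :: "nat monoid" and h where "group H" and "h \<in> iso G H"
proof -
  obtain h :: "_ \<Rightarrow> nat" where inj: "inj_on h (carrier G)"
    using assms(2) by (rule countableE)
  define H :: "nat monoid" where "H = \<lparr>carrier = h ` carrier G,
     mult = \<lambda>x y. h (inv_into (carrier G) h x \<otimes>\<^bsub>G\<^esub> inv_into (carrier G) h y), one = h \<one>\<^bsub>G\<^esub>\<rparr>"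
  have hom: "h \<in> hom G H"
    unfolding hom_def H_def using inj by (auto simp: inv_into_f_f)
  have "H\<lparr>carrier := h ` carrier G, one := h \<one>\<^bsub>G\<^esub>\<rparr> = H" by (simp add: H_def)
  then have "group H"
    using group.hom_imp_img_group[OF assms(1) hom] by simp
  moreover have "h \<in> iso G H"
    using hom inj by (auto simp: iso_def H_def bij_betw_def)
  ultimately show thesis by (rule that)
qed

lemma finite_Bij: "finite S \<Longrightarrow> finite (Bij S)"
  by (rule finite_subset[OF _ finite_PiE[of S "\<lambda>_. S"]])
     (auto simp: Bij_def PiE_def bij_betw_def)

lemma carrier_BijGroup [simp]: "carrier (BijGroup S) = Bij S"
  by (simp add: BijGroup_def)

lemma BijGroup_mult_apply:
  "f \<in> Bij S \<Longrightarrow> g \<in> Bij S \<Longrightarrow> x \<in> S \<Longrightarrow> (f \<otimes>\<^bsub>BijGroup S\<^esub> g) x = f (g x)"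
  by (simp add: BijGroup_def compose_def)

definition reduced_words :: "nat \<Rightarrow> nat \<Rightarrow> nat list set" where
  "reduced_words d N = {w. set w \<subseteq> {1..d} \<and> length w \<le> N \<and> successively (\<noteq>) w}"

definition toggle :: "nat \<Rightarrow> nat \<Rightarrow> nat list \<Rightarrow> nat list" where
  "toggle N a w = (if w \<noteq> [] \<and> hd w = a then tl w else if length w < N then a # w else w)"

definition toggle_perm :: "nat \<Rightarrow> nat \<Rightarrow> nat \<Rightarrow> nat list \<Rightarrow> nat list" where
  "toggle_perm d N a = (\<lambda>w \<in> reduced_words d N. toggle N a w)"

lemma finite_reduced_words: "finite (reduced_words d N)"
  by (rule finite_subset[OF _ finite_lists_length_le[of "{1..d}" N]])
     (auto simp: reduced_words_def)

lemma drop_in_reduced_words: "w \<in> reduced_words d N \<Longrightarrow> drop m w \<in> reduced_words d N"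
  unfolding reduced_words_def
  using successively_append_iff[of "(\<noteq>)" "take m w" "drop m w"]
  by (auto dest: in_set_dropD)

lemma map_upt_in_reduced_words_iff:
  "map i [0..<n] \<in> reduced_words d N \<longleftrightarrow>
     (\<forall>l < n. i l \<in> {1..d}) \<and> n \<le> N \<and> (\<forall>l. Suc l < n \<longrightarrow> i l \<noteq> i (Suc l))"
  by (auto simp: reduced_words_def successively_conv_nth image_subset_iff simp del: upt_Suc)

lemma toggle_in_reduced_words:
  assumes "a \<in> {1..d}" and "w \<in> reduced_words d N"
  shows "toggle N a w \<in> reduced_words d N"
  using assms by (cases w) (auto simp: reduced_words_def toggle_def successively_Cons)

lemma toggle_toggle: "w \<in> reduced_words d N \<Longrightarrow> toggle N a (toggle N a w) = w"
  by (cases w; cases "tl w") (auto simp: reduced_words_def toggle_def)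

lemma toggle_Cons: "a # w \<in> reduced_words d N \<Longrightarrow> toggle N a w = a # w"
  by (cases w) (auto simp: reduced_words_def toggle_def)

lemma toggle_perm_Bij: "a \<in> {1..d} \<Longrightarrow> toggle_perm d N a \<in> Bij (reduced_words d N)"
  unfolding Bij_def toggle_perm_def
  by (auto intro!: bij_betw_byWitness[where f' = "toggle N a"]
           simp: toggle_in_reduced_words toggle_toggle)

lemma inv_toggle_perm:
  assumes "a \<in> {1..d}"
  shows "inv\<^bsub>BijGroup (reduced_words d N)\<^esub> (toggle_perm d N a) = toggle_perm d N a"
proof (rule group.inv_equality[OF group_BijGroup])
  show "toggle_perm d N a \<otimes>\<^bsub>BijGroup (reduced_words d N)\<^esub> toggle_perm d N a
      = \<one>\<^bsub>BijGroup (reduced_words d N)\<^esub>"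
    using toggle_perm_Bij[OF assms]
    by (auto simp: BijGroup_def compose_def toggle_perm_def toggle_in_reduced_words[OF assms]
             toggle_toggle)
qed (simp_all add: BijGroup_def toggle_perm_Bij[OF assms])

lemma inj_on_toggle_perm:
  assumes "0 < N"
  shows "inj_on (toggle_perm d N) {1..d}"
proof (rule inj_onI)
  fix a b assume "a \<in> {1..d}" "b \<in> {1..d}" "toggle_perm d N a = toggle_perm d N b"
  then have "toggle_perm d N a [] = toggle_perm d N b []" by simp
  then show "a = b" using assms by (simp add: toggle_perm_def toggle_def reduced_words_def)
qed

text \<open>Reading the alternating word from the right, each letter is pushed onto the front of
  the word built so far; the inverses are harmless because every generator is an involution.\<close>

lemma alt_word_toggle_perm_apply:
  assumes w: "map i [0..<n] \<in> reduced_words d N" and "2*k \<le> n"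
  shows "alt_word (BijGroup (reduced_words d N)) (toggle_perm d N) i k (map i [2*k..<n])
       = map i [0..<n]"
  using assms(2)
proof (induction k)
  case 0
  show ?case using w by (simp add: BijGroup_def)
next
  case (Suc k)
  let ?X = "reduced_words d N" and ?T = "toggle_perm d N"
  define L where "L m = map i [m..<n]" for m
  have L_in: "L m \<in> ?X" for m
    using drop_in_reduced_words[OF w, of m] by (simp add: L_def drop_map)
  have gens: "\<forall>l < n. i l \<in> {1..d}" using w map_upt_in_reduced_words_iff by blast
  have push: "?T (i m) (L (Suc m)) = L m" if "m < n" for m
  proof -
    have "L m = i m # L (Suc m)" using that by (simp add: L_def upt_conv_Cons)
    then show ?thesis using L_in toggle_Cons[of "i m"] by (metis toggle_perm_def restrict_apply')
  qed
  have T_Bij: "?T (i l) \<in> Bij ?X" if "l < n" for l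
    using toggle_perm_Bij gens that by blast
  have "alt_word (BijGroup ?X) ?T i k \<in> carrier (BijGroup ?X)"
    by (rule alt_word_closed[OF group_BijGroup]) (use T_Bij Suc.prems in auto)
  moreover have "?T (i (2*k)) \<otimes>\<^bsub>BijGroup ?X\<^esub> ?T (i (2*k+1)) \<in> Bij ?X"
    using T_Bij[of "2*k"] T_Bij[of "2*k+1"] Suc.prems
      monoid.m_closed[OF group.is_monoid[OF group_BijGroup]]
    by simp
  ultimately have "alt_word (BijGroup ?X) ?T i (Suc k) (L (2 * Suc k))
      = alt_word (BijGroup ?X) ?T i k (?T (i (2*k)) (?T (i (2*k+1)) (L (2*k+2))))"
    using inv_toggle_perm gens Suc.prems L_in T_Bij
    by (simp add: BijGroup_mult_apply)
  also have "\<dots> = alt_word (BijGroup ?X) ?T i k (L (2*k))"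
    using push[of "2*k+1"] push[of "2*k"] Suc.prems by simp
  also have "\<dots> = L 0" using Suc by (simp add: L_def)
  finally show ?case by (simp add: L_def)
qed

lemma cond_G_toggle_perm:
  assumes "2*p \<le> N"
  shows "cond_G (BijGroup (reduced_words d N)) (toggle_perm d N) d p"
  unfolding cond_G_def cond_R_def
proof (intro ballI allI impI)
  fix q i assume q: "q \<in> {1..p}" and gens: "\<forall>l < 2*q. i l \<in> {1..d}"
    and one: "alt_word (BijGroup (reduced_words d N)) (toggle_perm d N) i q
            = \<one>\<^bsub>BijGroup (reduced_words d N)\<^esub>"
  show "\<exists>l < 2*q. i l = i ((l + 1) mod (2*q))"
  proof (rule ccontr)
    assume "\<not> ?thesis"
    then have "\<forall>l. Suc l < 2*q \<longrightarrow> i l \<noteq> i (Suc l)"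
      by (metis Suc_eq_plus1 Suc_lessD mod_less)
    then have w: "map i [0..<2*q] \<in> reduced_words d N"
      using gens q assms by (simp add: map_upt_in_reduced_words_iff del: upt_Suc)
    have "[] \<in> reduced_words d N" by (simp add: reduced_words_def)
    then have "map i [0..<2*q] = []"
      using alt_word_toggle_perm_apply[OF w order.refl] one by (simp add: BijGroup_def)
    then show False using q by simp
  qed
qed

theorem proposition5p4:
  fixes p d :: nat
  assumes "p \<ge> 2" and "d \<ge> 3"
  shows "\<exists>(G :: nat monoid) (g :: nat \<Rightarrow> nat).
           group G \<and> finite (carrier G) \<and>
           g ` {1..d} \<subseteq> carrier G \<and> card (g ` {1..d}) = d \<and>
           cond_G G g d p"
proof -
  define X where "X = reduced_words d (2*p)"
  have fin: "finite (carrier (BijGroup X))"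
    by (simp add: BijGroup_def X_def finite_Bij finite_reduced_words)
  obtain G :: "nat monoid" and h where G: "group G" and h: "h \<in> iso (BijGroup X) G"
    using countable_group_iso_nat_monoid[OF group_BijGroup countable_finite[OF fin]] .
  interpret group_hom "BijGroup X" G h
    using G h by (simp add: group_hom_def group_hom_axioms_def group_BijGroup iso_def)
  have inj: "inj_on h (carrier (BijGroup X))" and onto: "h ` carrier (BijGroup X) = carrier G"
    using h by (auto simp: iso_def bij_betw_def)
  have gens: "toggle_perm d (2*p) ` {1..d} \<subseteq> carrier (BijGroup X)"
    using toggle_perm_Bij by (auto simp: BijGroup_def X_def)
  have "inj_on (\<lambda>a. h (toggle_perm d (2*p) a)) {1..d}"
    using comp_inj_on[OF inj_on_toggle_perm inj_on_subset[OF inj gens]] assms(1) by (simp add: o_def)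
  moreover have "cond_G G (\<lambda>a. h (toggle_perm d (2*p) a)) d p"
    using cond_G_inj_hom[OF inj gens] cond_G_toggle_perm[of p "2*p" d] by (simp add: X_def)
  moreover have "finite (carrier G)" using fin onto by (metis finite_imageI)
  ultimately show ?thesis
    using G onto gens by (intro exI[of _ G] exI[of _ "\<lambda>a. h (toggle_perm d (2*p) a)"])
      (auto simp: card_image)
qed

end
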